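(* Let $G=(V,E)$ be a graph of order $n$ such that $\tau(G)=\tau>\frac{n}{2}$. If its $\tau$-set $W$ satisfies $G[W]\cong\overline{K_\tau}$ (i.e. $W$ is an independent set), then $\beta_p(G)=\tau$.
   Context: All graphs are finite, simple, undirected and connected. Two vertices $u,v$ are twins if $N(u)\setminus\{v\}=N(v)\setminus\{u\}$; the twin number $\tau(G)$ is the maximum cardinality of an equivalence class of the twin relation; a $\tau$-set is a set of pairwise twin vertices of cardinality $\tau(G)$ (unique when $\tau(G)>n/2$). For a partition $\Pi=\{S_1,\dots,S_k\}$ of $V(G)$, $r(u|\Pi)=(d(u,S_1),\dots,d(u,S_k))$ with $d(u,S)=\min_{w\in S}d(u,w)$; $\Pi$ is locating if $r(u|\Pi)\ne r(v|\Pi)$ for all distinct $u,v$; $\beta_p(G)$ is the minimum size of a locating partition. *)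

theory Defs
  imports Main
begin

definition simple_graph :: "'a set \<Rightarrow> ('a \<Rightarrow> 'a \<Rightarrow> bool) \<Rightarrow> bool" where
  "simple_graph V E \<longleftrightarrow> finite V \<and> V \<noteq> {} \<and>
     (\<forall>u v. E u v \<longrightarrow> u \<in> V \<and> v \<in> V) \<and>
     (\<forall>u v. E u v \<longrightarrow> E v u) \<and> (\<forall>u. \<not> E u u)"

definition is_walk :: "('a \<Rightarrow> 'a \<Rightarrow> bool) \<Rightarrow> 'a list \<Rightarrow> bool" where
  "is_walk E xs \<longleftrightarrow> xs \<noteq> [] \<and> (\<forall>i. Suc i < length xs \<longrightarrow> E (xs ! i) (xs ! Suc i))"

definition connected_graph :: "'a set \<Rightarrow> ('a \<Rightarrow> 'a \<Rightarrow> bool) \<Rightarrow> bool" where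
  "connected_graph V E \<longleftrightarrow> simple_graph V E \<and>
     (\<forall>u\<in>V. \<forall>v\<in>V. \<exists>xs. is_walk E xs \<and> hd xs = u \<and> last xs = v)"

definition gdist :: "('a \<Rightarrow> 'a \<Rightarrow> bool) \<Rightarrow> 'a \<Rightarrow> 'a \<Rightarrow> nat" where
  "gdist E u v = (LEAST n. \<exists>xs. is_walk E xs \<and> hd xs = u \<and> last xs = v \<and> length xs = Suc n)"

definition setdist :: "('a \<Rightarrow> 'a \<Rightarrow> bool) \<Rightarrow> 'a \<Rightarrow> 'a set \<Rightarrow> nat" where
  "setdist E u S = Min (gdist E u ` S)"

definition nbhd :: "'a set \<Rightarrow> ('a \<Rightarrow> 'a \<Rightarrow> bool) \<Rightarrow> 'a \<Rightarrow> 'a set" where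
  "nbhd V E u = {w \<in> V. E u w}"

definition twins :: "'a set \<Rightarrow> ('a \<Rightarrow> 'a \<Rightarrow> bool) \<Rightarrow> 'a \<Rightarrow> 'a \<Rightarrow> bool" where
  "twins V E u v \<longleftrightarrow> u \<in> V \<and> v \<in> V \<and> nbhd V E u - {v} = nbhd V E v - {u}"

definition twin_class :: "'a set \<Rightarrow> ('a \<Rightarrow> 'a \<Rightarrow> bool) \<Rightarrow> 'a \<Rightarrow> 'a set" where
  "twin_class V E u = {v \<in> V. twins V E u v}"

definition twin_number :: "'a set \<Rightarrow> ('a \<Rightarrow> 'a \<Rightarrow> bool) \<Rightarrow> nat" where
  "twin_number V E = Max ((\<lambda>u. card (twin_class V E u)) ` V)"

definition tau_set :: "'a set \<Rightarrow> ('a \<Rightarrow> 'a \<Rightarrow> bool) \<Rightarrow> 'a set \<Rightarrow> bool" where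
  "tau_set V E W \<longleftrightarrow> W \<subseteq> V \<and> (\<forall>u\<in>W. \<forall>v\<in>W. twins V E u v) \<and> card W = twin_number V E"

definition is_partition :: "'a set \<Rightarrow> 'a set set \<Rightarrow> bool" where
  "is_partition V P \<longleftrightarrow> (\<forall>S\<in>P. S \<noteq> {}) \<and> \<Union>P = V \<and>
     (\<forall>S\<in>P. \<forall>T\<in>P. S \<noteq> T \<longrightarrow> S \<inter> T = {})"

definition rep :: "('a \<Rightarrow> 'a \<Rightarrow> bool) \<Rightarrow> 'a set set \<Rightarrow> 'a \<Rightarrow> 'a set \<Rightarrow> nat" where
  "rep E P u = (\<lambda>S. if S \<in> P then setdist E u S else 0)"

definition locating_partition :: "'a set \<Rightarrow> ('a \<Rightarrow> 'a \<Rightarrow> bool) \<Rightarrow> 'a set set \<Rightarrow> bool" where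
  "locating_partition V E P \<longleftrightarrow> is_partition V P \<and>
     (\<forall>u\<in>V. \<forall>v\<in>V. u \<noteq> v \<longrightarrow> rep E P u \<noteq> rep E P v)"

definition partition_dimension :: "'a set \<Rightarrow> ('a \<Rightarrow> 'a \<Rightarrow> bool) \<Rightarrow> nat" where
  "partition_dimension V E = (LEAST k. \<exists>P. locating_partition V E P \<and> card P = k)"

end

theory Submission imports Defs begin

text \<open>Twins have the same distance to every third vertex, so twins lying in one class of a
partition have the same representation; hence a locating partition has at least as many classes
as there are pairwise twin vertices, and \<open>\<beta>\<^sub>p \<ge> \<tau>\<close>. Conversely, fewer than \<open>\<tau>\<close> vertices
lie outside the \<open>\<tau>\<close>-set \<open>W\<close>, so they can be attached injectively to distinct vertices of
\<open>W\<close>, leaving some \<open>w\<^sub>0 \<in> W\<close> alone. Take the classes \<open>{w} \<union> f\<^sup>-\<^sup>1(w)\<close>. A class \<open>{w, x}\<close>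
is separated by \<open>{w\<^sub>0}\<close> when \<open>x\<close> is adjacent to \<open>w\<close> (then \<open>x\<close> is adjacent to all of the
independent twin set \<open>W\<close>), and otherwise by the class of a vertex \<open>y\<close> adjacent to exactly one
of \<open>w\<close>, \<open>x\<close>, which exists because \<open>x\<close> is not a twin of \<open>w\<close> by maximality of \<open>W\<close>.\<close>

lemma connected_graph_walk:
  assumes "connected_graph V E" "u \<in> V" "v \<in> V"
  shows "\<exists>xs. is_walk E xs \<and> hd xs = u \<and> last xs = v"
  using assms unfolding connected_graph_def by blast

lemma gdist_le_walk:
  assumes "is_walk E xs" "hd xs = u" "last xs = v"
  shows "gdist E u v \<le> length xs - 1"
  unfolding gdist_def
  by (rule Least_le) (use assms in \<open>auto simp: is_walk_def intro!: exI[of _ xs]\<close>)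

lemma gdist_shortest_walk:
  assumes "\<exists>xs. is_walk E xs \<and> hd xs = u \<and> last xs = v"
  obtains xs where "is_walk E xs" "hd xs = u" "last xs = v" "length xs = Suc (gdist E u v)"
proof -
  from assms obtain xs where xs: "is_walk E xs" "hd xs = u" "last xs = v" by blast
  then have "\<exists>n xs. is_walk E xs \<and> hd xs = u \<and> last xs = v \<and> length xs = Suc n"
    by (intro exI[of _ "length xs - 1"] exI[of _ xs]) (auto simp: is_walk_def)
  then have "\<exists>xs. is_walk E xs \<and> hd xs = u \<and> last xs = v \<and> length xs = Suc (gdist E u v)"
    unfolding gdist_def by (rule LeastI_ex)
  then show thesis using that by blast
qed

lemma gdist_self [simp]: "gdist E u u = 0"
  using gdist_le_walk[of E "[u]" u u] by (simp add: is_walk_def)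

lemma gdist_eq_0_iff:
  assumes "\<exists>xs. is_walk E xs \<and> hd xs = u \<and> last xs = v"
  shows "gdist E u v = 0 \<longleftrightarrow> u = v"
proof
  assume "gdist E u v = 0"
  obtain xs where "hd xs = u" "last xs = v" "length xs = Suc (gdist E u v)"
    using gdist_shortest_walk[OF assms] by blast
  with \<open>gdist E u v = 0\<close> show "u = v" by (cases xs) auto
qed simp

lemma gdist_le_1_if_edge:
  assumes "E u v"
  shows "gdist E u v \<le> 1"
proof -
  have "is_walk E [u, v]" using assms by (auto simp: is_walk_def nth_Cons split: nat.splits)
  then show ?thesis using gdist_le_walk[of E "[u, v]" u v] by simp
qed

lemma edge_if_gdist_eq_1:
  assumes "gdist E u v = 1" "\<exists>xs. is_walk E xs \<and> hd xs = u \<and> last xs = v"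
  shows "E u v"
proof -
  obtain xs where xs: "is_walk E xs" "hd xs = u" "last xs = v" "length xs = 2"
    using gdist_shortest_walk[OF assms(2)] assms(1) by (metis numeral_2_eq_2 One_nat_def)
  then obtain a b where "xs = [a, b]" by (auto simp: numeral_2_eq_2 length_Suc_conv)
  with xs show ?thesis by (auto simp: is_walk_def)
qed

text \<open>A shortest walk from \<open>v\<close> to \<open>t\<close> either passes through \<open>u\<close> right away, or its second
vertex is a neighbour of \<open>v\<close> other than \<open>u\<close>, hence of \<open>u\<close>; either way \<open>u\<close> can replace \<open>v\<close>.\<close>
lemma gdist_twin_le:
  assumes "simple_graph V E" "twins V E u v" "t \<noteq> u" "t \<noteq> v"
    and "\<exists>xs. is_walk E xs \<and> hd xs = v \<and> last xs = t"
  shows "gdist E u t \<le> gdist E v t"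
proof -
  obtain xs where xs: "is_walk E xs" "hd xs = v" "last xs = t" "length xs = Suc (gdist E v t)"
    using gdist_shortest_walk[OF assms(5)] by blast
  then obtain z zs where xs_eq: "xs = v # z # zs"
    using \<open>t \<noteq> v\<close> by (cases xs; cases "tl xs") auto
  have "E v z" using xs(1) unfolding xs_eq is_walk_def by force
  have walk_tail: "is_walk E (z # zs)"
    using xs(1) unfolding xs_eq is_walk_def by (metis length_Cons nth_Cons_Suc Suc_less_eq list.distinct(1))
  have last_tail: "last (z # zs) = t" using xs(3) xs_eq by simp
  show ?thesis
  proof (cases "z = u")
    case True
    then show ?thesis using gdist_le_walk[OF walk_tail _ last_tail] xs(4) xs_eq by simp
  next
    case False
    have "z \<in> nbhd V E v - {u}"
      using \<open>E v z\<close> False assms(1) unfolding nbhd_def simple_graph_def by auto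
    then have "E u z" using assms(2) unfolding twins_def nbhd_def by auto
    then have "is_walk E (u # z # zs)"
      using walk_tail unfolding is_walk_def by (auto simp: nth_Cons split: nat.splits)
    then show ?thesis using gdist_le_walk[of E "u # z # zs" u t] last_tail xs(4) xs_eq by simp
  qed
qed

lemma gdist_twins_eq:
  assumes "connected_graph V E" "twins V E u v" "t \<in> V" "t \<noteq> u" "t \<noteq> v"
  shows "gdist E u t = gdist E v t"
proof (rule antisym)
  have sg: "simple_graph V E" using assms(1) by (simp add: connected_graph_def)
  have "u \<in> V" "v \<in> V" "twins V E v u" using assms(2) by (auto simp: twins_def)
  show "gdist E u t \<le> gdist E v t"
    by (rule gdist_twin_le[OF sg assms(2,4,5) connected_graph_walk[OF assms(1) \<open>v \<in> V\<close> assms(3)]])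
  show "gdist E v t \<le> gdist E u t"
    by (rule gdist_twin_le[OF sg \<open>twins V E v u\<close> assms(5,4) connected_graph_walk[OF assms(1) \<open>u \<in> V\<close> assms(3)]])
qed

lemma setdist_le_gdist:
  assumes "finite S" "s \<in> S"
  shows "setdist E u S \<le> gdist E u s"
  unfolding setdist_def using assms by simp

lemma setdist_attained:
  assumes "finite S" "S \<noteq> {}"
  obtains s where "s \<in> S" "setdist E u S = gdist E u s"
proof -
  have "setdist E u S \<in> gdist E u ` S"
    unfolding setdist_def using assms by (intro Min_in) auto
  then show thesis using that by blast
qed

lemma connected_graph_finite: "connected_graph V E \<Longrightarrow> finite V"
  by (simp add: connected_graph_def simple_graph_def)

lemma setdist_eq_0_iff:
  assumes "connected_graph V E" "S \<subseteq> V" "S \<noteq> {}" "u \<in> V"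
  shows "setdist E u S = 0 \<longleftrightarrow> u \<in> S"
proof
  have fin: "finite S" using finite_subset[OF assms(2) connected_graph_finite[OF assms(1)]] .
  show "u \<in> S" if "setdist E u S = 0"
  proof -
    obtain s where s: "s \<in> S" "setdist E u S = gdist E u s"
      using setdist_attained[OF fin assms(3)] by blast
    have "gdist E u s = 0" using s(2) that by simp
    then have "u = s"
      using gdist_eq_0_iff[OF connected_graph_walk[OF assms(1,4)]] s(1) assms(2) by blast
    then show ?thesis using s(1) by simp
  qed
  show "setdist E u S = 0" if "u \<in> S"
    using setdist_le_gdist[OF fin that, of E u] by simp
qed

lemma setdist_eq_1_iff:
  assumes "connected_graph V E" "S \<subseteq> V" "S \<noteq> {}" "u \<in> V" "u \<notin> S"
  shows "setdist E u S = 1 \<longleftrightarrow> (\<exists>s\<in>S. E u s)"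
proof
  have fin: "finite S" using finite_subset[OF assms(2) connected_graph_finite[OF assms(1)]] .
  have pos: "setdist E u S \<noteq> 0" using setdist_eq_0_iff[OF assms(1-4)] assms(5) by simp
  show "\<exists>s\<in>S. E u s" if "setdist E u S = 1"
  proof -
    obtain s where s: "s \<in> S" "setdist E u S = gdist E u s"
      using setdist_attained[OF fin assms(3)] by blast
    have "E u s"
      using edge_if_gdist_eq_1[OF _ connected_graph_walk[OF assms(1,4)]] s that assms(2) by auto
    then show ?thesis using s(1) by blast
  qed
  show "setdist E u S = 1" if adjacent: "\<exists>s\<in>S. E u s"
  proof -
    obtain s where "s \<in> S" "E u s" using adjacent by blast
    then have "setdist E u S \<le> 1"
      using setdist_le_gdist[OF fin, of s E u] gdist_le_1_if_edge[of E u s] by simp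
    then show ?thesis using pos by simp
  qed
qed

lemma rep_neq_if_setdist_neq:
  assumes "S \<in> P" "setdist E u S \<noteq> setdist E v S"
  shows "rep E P u \<noteq> rep E P v"
  using assms unfolding rep_def by metis

lemma partition_class_subset:
  assumes "is_partition V P" "S \<in> P"
  shows "S \<subseteq> V" "S \<noteq> {}"
  using assms unfolding is_partition_def by auto

text \<open>Vertices in different classes are told apart by the entries equal to \<open>0\<close>.\<close>
lemma locating_partitionI:
  assumes "connected_graph V E" "is_partition V P"
    and "\<And>S u v. S \<in> P \<Longrightarrow> u \<in> S \<Longrightarrow> v \<in> S \<Longrightarrow> u \<noteq> v \<Longrightarrow> rep E P u \<noteq> rep E P v"
  shows "locating_partition V E P"
  unfolding locating_partition_def
proof (intro conjI ballI impI assms(2))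
  fix u v assume "u \<in> V" "v \<in> V" "u \<noteq> v"
  then obtain S where S: "S \<in> P" "u \<in> S"
    using assms(2) unfolding is_partition_def by blast
  show "rep E P u \<noteq> rep E P v"
  proof (cases "v \<in> S")
    case False
    have "setdist E u S = 0" "setdist E v S \<noteq> 0"
      using setdist_eq_0_iff[OF assms(1) partition_class_subset[OF assms(2) S(1)]] S False
        \<open>u \<in> V\<close> \<open>v \<in> V\<close> by simp_all
    then have "setdist E u S \<noteq> setdist E v S" by simp
    then show ?thesis by (rule rep_neq_if_setdist_neq[OF S(1)])
  qed (use assms(3) S \<open>u \<noteq> v\<close> in blast)
qed

lemma twins_rep_eq:
  assumes "connected_graph V E" "is_partition V P" "twins V E u v" "S \<in> P" "u \<in> S" "v \<in> S"
  shows "rep E P u = rep E P v"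
proof
  fix T
  show "rep E P u T = rep E P v T"
  proof (cases "T \<in> P")
    case True
    have T: "T \<subseteq> V" "T \<noteq> {}" using partition_class_subset[OF assms(2) True] by auto
    have uv: "u \<in> V" "v \<in> V" using assms(3) by (auto simp: twins_def)
    show ?thesis
    proof (cases "T = S")
      case True
      then have "setdist E u T = 0" "setdist E v T = 0"
        using setdist_eq_0_iff[OF assms(1) T] uv assms(5,6) by simp_all
      then show ?thesis by (simp add: rep_def)
    next
      case False
      then have "u \<notin> T" "v \<notin> T"
        using assms(2,4-6) \<open>T \<in> P\<close> unfolding is_partition_def by blast+
      then have "gdist E u ` T = gdist E v ` T"
        using gdist_twins_eq[OF assms(1,3)] T(1) by (intro image_cong) auto
      then show ?thesis by (simp add: rep_def setdist_def)
    qed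
  qed (simp add: rep_def)
qed

lemma card_twin_set_le_locating_partition:
  assumes "connected_graph V E" "locating_partition V E P"
    and "W \<subseteq> V" "\<forall>u\<in>W. \<forall>v\<in>W. twins V E u v"
  shows "card W \<le> card P"
proof -
  have part: "is_partition V P" and loc: "\<forall>u\<in>V. \<forall>v\<in>V. u \<noteq> v \<longrightarrow> rep E P u \<noteq> rep E P v"
    using assms(2) unfolding locating_partition_def by auto
  have "finite P" using connected_graph_finite[OF assms(1)] using part unfolding is_partition_def by (metis finite_UnionD)
  define part_of where "part_of w = (SOME S. S \<in> P \<and> w \<in> S)" for w
  have part_of: "part_of w \<in> P" "w \<in> part_of w" if "w \<in> W" for w
    using someI_ex[of "\<lambda>S. S \<in> P \<and> w \<in> S"] that assms(3) part
    unfolding part_of_def is_partition_def by blast+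
  have "inj_on part_of W"
  proof
    fix u v assume "u \<in> W" "v \<in> W" "part_of u = part_of v"
    then have "rep E P u = rep E P v"
      using twins_rep_eq[OF assms(1) part] part_of assms(4) by metis
    then show "u = v" using loc assms(3) \<open>u \<in> W\<close> \<open>v \<in> W\<close> by blast
  qed
  then show ?thesis using card_inj_on_le[of part_of W P] part_of(1) \<open>finite P\<close> by blast
qed

lemma tau_set_closed_under_twins:
  assumes "finite V" "tau_set V E W" "w \<in> W" "twins V E w x"
  shows "x \<in> W"
proof (rule ccontr)
  assume "x \<notin> W"
  have "x \<in> V" using assms(4) by (simp add: twins_def)
  with assms(2-4) have "insert x W \<subseteq> twin_class V E w"
    unfolding tau_set_def twin_class_def by auto
  then have "card (insert x W) \<le> card (twin_class V E w)"
    by (rule card_mono[rotated]) (simp add: twin_class_def assms(1))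
  also have "\<dots> \<le> twin_number V E"
    unfolding twin_number_def using assms(1-3) by (intro Max_ge) (auto simp: tau_set_def)
  finally show False
    using assms(1-3) \<open>x \<notin> W\<close> finite_subset by (fastforce simp: tau_set_def)
qed

lemma nonadjacent_twins_common_neighbour:
  assumes "simple_graph V E" "twins V E u v" "\<not> E u v" "E u y"
  shows "E v y"
proof (cases "u = v")
  case False
  have "y \<in> nbhd V E u - {v}"
    using assms unfolding simple_graph_def nbhd_def by auto
  then show ?thesis using assms(2) by (auto simp: twins_def nbhd_def)
qed (use assms in simp)

lemma adjacent_to_independent_twin_set:
  assumes "simple_graph V E" "\<forall>u\<in>W. \<forall>v\<in>W. twins V E u v" "\<forall>u\<in>W. \<forall>v\<in>W. \<not> E u v"
    and "w \<in> W" "w' \<in> W" "E x w"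
  shows "E x w'"
proof -
  have sym: "\<And>u v. E u v \<Longrightarrow> E v u" using assms(1) unfolding simple_graph_def by blast
  show ?thesis
    using nonadjacent_twins_common_neighbour[OF assms(1) assms(2,3)[rule_format, OF assms(4,5)]
        sym[OF assms(6)]] by (rule sym)
qed

definition fibre_partition :: "'a set \<Rightarrow> 'a set \<Rightarrow> ('a \<Rightarrow> 'a) \<Rightarrow> 'a set set" where
  "fibre_partition V W f = (\<lambda>w. insert w {x \<in> V - W. f x = w}) ` W"

lemma is_partition_fibre_partition:
  assumes "W \<subseteq> V" "f ` (V - W) \<subseteq> W"
  shows "is_partition V (fibre_partition V W f)"
  using assms unfolding is_partition_def fibre_partition_def by auto

lemma card_fibre_partition:
  assumes "finite W"
  shows "card (fibre_partition V W f) = card W"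
proof -
  have "inj_on (\<lambda>w. insert w {x \<in> V - W. f x = w}) W"
    unfolding inj_on_def by blast
  then show ?thesis unfolding fibre_partition_def by (rule card_image)
qed

lemma singleton_in_fibre_partition:
  assumes "w \<in> W" "w \<notin> f ` (V - W)"
  shows "{w} \<in> fibre_partition V W f"
proof -
  have "{w} = insert w {x \<in> V - W. f x = w}" using assms(2) by auto
  then show ?thesis unfolding fibre_partition_def using assms(1) by (rule image_eqI)
qed

lemma pair_in_fibre_partition:
  assumes "inj_on f (V - W)" "x \<in> V - W" "f x \<in> W"
  shows "{f x, x} \<in> fibre_partition V W f"
proof -
  have "{f x, x} = insert (f x) {z \<in> V - W. f z = f x}"
    using assms(1,2) by (auto dest: inj_onD)
  then show ?thesis unfolding fibre_partition_def using assms(3) by (rule image_eqI)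
qed

lemma fibre_partition_class_pair:
  assumes "inj_on f (V - W)" "S \<in> fibre_partition V W f" "u \<in> S" "v \<in> S" "u \<noteq> v"
  obtains w x where "w \<in> W" "x \<in> V - W" "f x = w" "{u, v} = {w, x}"
  using assms unfolding fibre_partition_def by (auto dest: inj_onD)

lemma fibre_partition_separates_pair:
  assumes conn: "connected_graph V E" and "W \<subseteq> V"
    and twin: "\<forall>u\<in>W. \<forall>v\<in>W. twins V E u v" and indep: "\<forall>u\<in>W. \<forall>v\<in>W. \<not> E u v"
    and maximal: "\<forall>w\<in>W. \<forall>x\<in>V - W. \<not> twins V E w x"
    and f: "f ` (V - W) \<subseteq> W" "inj_on f (V - W)" and w0: "w0 \<in> W" "w0 \<notin> f ` (V - W)"
    and wx: "w \<in> W" "x \<in> V - W" "f x = w"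
  shows "rep E (fibre_partition V W f) w \<noteq> rep E (fibre_partition V W f) x"
proof -
  have sg: "simple_graph V E" using conn by (simp add: connected_graph_def)
  then have sym: "\<And>u v. E u v \<Longrightarrow> E v u" and irrefl: "\<And>u. \<not> E u u"
    unfolding simple_graph_def by blast+
  have "w \<in> V" "x \<in> V" "x \<notin> W" using wx \<open>W \<subseteq> V\<close> by auto
  have adj_W: "E x w'" if "w' \<in> W" "E x w" for w'
    by (rule adjacent_to_independent_twin_set[OF sg twin indep wx(1) that])
  show ?thesis
  proof (cases "E w x")
    case True
    have "w0 \<in> V" "w \<noteq> w0" using w0 wx \<open>W \<subseteq> V\<close> by auto
    have "setdist E x {w0} = 1"
      using setdist_eq_1_iff[OF conn, of "{w0}" x] adj_W[OF w0(1) sym[OF True]]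
        \<open>w0 \<in> V\<close> \<open>x \<in> V\<close> \<open>x \<notin> W\<close> w0(1) by auto
    moreover have "setdist E w {w0} \<noteq> 1"
      using setdist_eq_1_iff[OF conn, of "{w0}" w] indep[rule_format, OF wx(1) w0(1)]
        \<open>w0 \<in> V\<close> \<open>w \<in> V\<close> \<open>w \<noteq> w0\<close> by auto
    ultimately show ?thesis
      using rep_neq_if_setdist_neq[OF singleton_in_fibre_partition[OF w0]] by metis
  next
    case False
    have x_nonadj_W: "\<not> E x w'" if "w' \<in> W" for w'
      using adjacent_to_independent_twin_set[OF sg twin indep that wx(1)] False sym[of x w] by blast
    have "\<not> twins V E w x" using maximal wx by blast
    then have "nbhd V E w - {x} \<noteq> nbhd V E x - {w}"
      using \<open>w \<in> V\<close> \<open>x \<in> V\<close> unfolding twins_def by blast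
    then obtain y where y: "y \<in> V" "E w y \<noteq> E x y" "y \<noteq> x" "y \<noteq> w"
      unfolding nbhd_def using irrefl by auto
    have "y \<notin> W" using y(2) indep[rule_format, OF wx(1)] x_nonadj_W by auto
    then have "y \<in> V - W" "f y \<in> W" "f y \<noteq> w" using y f wx by (auto dest: inj_onD)
    have T_sub: "{f y, y} \<subseteq> V" using \<open>f y \<in> W\<close> y(1) \<open>W \<subseteq> V\<close> by auto
    have "setdist E w {f y, y} = 1 \<longleftrightarrow> E w y"
      using setdist_eq_1_iff[OF conn T_sub _ \<open>w \<in> V\<close>] indep[rule_format, OF wx(1) \<open>f y \<in> W\<close>]
        \<open>f y \<noteq> w\<close> y(4) by auto
    moreover have "setdist E x {f y, y} = 1 \<longleftrightarrow> E x y"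
      using setdist_eq_1_iff[OF conn T_sub _ \<open>x \<in> V\<close>] x_nonadj_W[OF \<open>f y \<in> W\<close>]
        \<open>f y \<in> W\<close> wx(2) y(3) by auto
    ultimately show ?thesis
      using rep_neq_if_setdist_neq[OF pair_in_fibre_partition[OF f(2) \<open>y \<in> V - W\<close> \<open>f y \<in> W\<close>]] y(2)
      by metis
  qed
qed

lemma locating_fibre_partition:
  assumes "connected_graph V E" "W \<subseteq> V"
    and "\<forall>u\<in>W. \<forall>v\<in>W. twins V E u v" "\<forall>u\<in>W. \<forall>v\<in>W. \<not> E u v"
    and "\<forall>w\<in>W. \<forall>x\<in>V - W. \<not> twins V E w x"
    and f: "f ` (V - W) \<subseteq> W" "inj_on f (V - W)" and "w0 \<in> W" "w0 \<notin> f ` (V - W)"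
  shows "locating_partition V E (fibre_partition V W f)"
proof (rule locating_partitionI[OF assms(1) is_partition_fibre_partition[OF assms(2) f(1)]])
  fix S u v assume "S \<in> fibre_partition V W f" "u \<in> S" "v \<in> S" "u \<noteq> v"
  then obtain w x where "w \<in> W" "x \<in> V - W" "f x = w" "{u, v} = {w, x}"
    using fibre_partition_class_pair[OF f(2)] by metis
  moreover from this have "rep E (fibre_partition V W f) w \<noteq> rep E (fibre_partition V W f) x"
    using fibre_partition_separates_pair[OF assms] by blast
  ultimately show "rep E (fibre_partition V W f) u \<noteq> rep E (fibre_partition V W f) v"
    by (metis doubleton_eq_iff)
qed

lemma inj_on_into_larger_set_misses:
  assumes "finite A" "finite B" "card A < card B"
  obtains f b where "f ` A \<subseteq> B" "inj_on f A" "b \<in> B" "b \<notin> f ` A"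
proof -
  obtain f where f: "f ` A \<subseteq> B" "inj_on f A"
    using card_le_inj[OF assms(1,2)] assms(3) by auto
  have "card (f ` A) < card B" using card_image[OF f(2)] assms(3) by simp
  then have "f ` A \<noteq> B" by auto
  then show thesis using that f by blast
qed

lemma partition_dimension_eqI:
  assumes "locating_partition V E P" "card P = k"
    and "\<And>Q. locating_partition V E Q \<Longrightarrow> k \<le> card Q"
  shows "partition_dimension V E = k"
  unfolding partition_dimension_def
  by (rule Least_equality) (use assms in blast)+

theorem proposition17:
  fixes V :: "'a set" and E :: "'a \<Rightarrow> 'a \<Rightarrow> bool" and W :: "'a set"
  assumes "connected_graph V E"
    and "2 * twin_number V E > card V"
    and "tau_set V E W"
    and "\<forall>u\<in>W. \<forall>v\<in>W. \<not> E u v"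
  shows "partition_dimension V E = twin_number V E"
proof -
  have "finite V" using connected_graph_finite[OF assms(1)] .
  have W: "W \<subseteq> V" "\<forall>u\<in>W. \<forall>v\<in>W. twins V E u v" "card W = twin_number V E"
    using assms(3) by (auto simp: tau_set_def)
  have maximal: "\<forall>w\<in>W. \<forall>x\<in>V - W. \<not> twins V E w x"
    using tau_set_closed_under_twins[OF \<open>finite V\<close> assms(3)] by blast
  have "finite W" using W(1) \<open>finite V\<close> finite_subset by blast
  moreover have "card (V - W) < card W"
    using card_Diff_subset[OF \<open>finite W\<close> W(1)] assms(2) W(3) by linarith
  ultimately obtain f w0 where f: "f ` (V - W) \<subseteq> W" "inj_on f (V - W)" "w0 \<in> W" "w0 \<notin> f ` (V - W)"
    using inj_on_into_larger_set_misses[of "V - W" W] \<open>finite V\<close> by blast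
  show ?thesis
  proof (rule partition_dimension_eqI)
    show "locating_partition V E (fibre_partition V W f)"
      by (rule locating_fibre_partition[OF assms(1) W(1,2) assms(4) maximal f])
    show "card (fibre_partition V W f) = twin_number V E"
      using card_fibre_partition[OF \<open>finite W\<close>] W(3) by simp
    show "twin_number V E \<le> card Q" if "locating_partition V E Q" for Q
      using card_twin_set_le_locating_partition[OF assms(1) that W(1,2)] W(3) by simp
  qed
qed

end
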